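(* Let $\bar Z\in\mathbb{R}^{C\times T\times m}$ be a collection of $m$ multi-channel signals $\bar z^1,\dots,\bar z^m\in\mathbb{R}^{C\times T}$, let $\alpha>0$, and for $j=1,\dots,k$ let $\alpha_j>0$, $\gamma_j\in\mathbb{R}$ and $\Pi^j$ be a nonnegative diagonal $m\times m$ matrix; set $\bar\Pi^j=\Pi^j\otimes I_T$. For each frequency $p\in\{0,\dots,T-1\}$ define $$\bar{\mathcal E}(p)=\alpha\big[I_C+\alpha\,\mathrm{DFT}(\bar Z)(p)\,\mathrm{DFT}(\bar Z)(p)^*\big]^{-1},\qquad \bar{\mathcal C}^j(p)=\alpha_j\big[I_C+\alpha_j\,\mathrm{DFT}(\bar Z)(p)\,\Pi^j\,\mathrm{DFT}(\bar Z)(p)^*\big]^{-1},$$ and $\bar U(p)=\bar{\mathcal E}(p)\,\mathrm{DFT}(\bar Z)(p)$, $\bar W^j(p)=\bar{\mathcal C}^j(p)\,\mathrm{DFT}(\bar Z)(p)$ (each in $\mathbb{C}^{C\times m}$), giving arrays $\bar U,\bar W^j\in\mathbb{C}^{C\times T\times m}$. Then the gradients with respect to the real array $\bar Z$ satisfy $$\frac{1}{2T}\frac{\partial\log\det\big(I+\alpha\,\mathsf{circ}(\bar Z)\mathsf{circ}(\bar Z)^*\big)}{\partial\bar Z}=\mathrm{IDFT}(\bar U),\qquad \frac{\gamma_j}{2T}\frac{\partial\log\det\big(I+\alpha_j\,\mathsf{circ}(\bar Z)\bar\Pi^j\mathsf{circ}(\bar Z)^*\big)}{\partial\bar Z}=\gamma_j\,\mathrm{IDFT}(\bar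 W^j\Pi^j),$$ where $\bar W^j\Pi^j$ denotes multiplying, at each frequency $p$, the $C\times m$ slice $\bar W^j(p)$ on the right by $\Pi^j$.
   Context: For $v\in\mathbb{R}^T$ (indices $t\in\{0,\dots,T-1\}$), $\mathsf{circ}(v)\in\mathbb{R}^{T\times T}$ has entries $v((a-b)\bmod T)$. For $\bar z\in\mathbb{R}^{C\times T}$ with channels $\bar z[c]\in\mathbb{R}^T$, $\mathsf{circ}(\bar z)\in\mathbb{R}^{CT\times T}$ stacks $\mathsf{circ}(\bar z[1]),\dots,\mathsf{circ}(\bar z[C])$ vertically, and $\mathsf{circ}(\bar Z)=[\mathsf{circ}(\bar z^1),\dots,\mathsf{circ}(\bar z^m)]\in\mathbb{R}^{CT\times Tm}$. DFT convention (applied along the time dimension, channel by channel and signal by signal): with $\omega=e^{-2\pi\sqrt{-1}/T}$, $\mathrm{DFT}(v)(p)=\sum_{t=0}^{T-1}v(t)\omega^{pt}$ and $\mathrm{IDFT}$ is its inverse, $\mathrm{IDFT}(u)(t)=\frac1T\sum_{p=0}^{T-1}u(p)\omega^{-pt}$. $\mathrm{DFT}(\bar Z)(p)\in\mathbb{C}^{C\times m}$ has $(c,i)$ entry $\mathrm{DFT}(\bar z^i[c])(p)$; for an array $\bar U\in\mathbb{C}^{C\times T\times m}$, $\bar U(p)$ is its $C\times m$ slice at frequency $p$. $^*$ is conjugate transpose; $\otimes$ is the Kronecker product. *)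

theory Defs
  imports "HOL-Analysis.Analysis" "Jordan_Normal_Form.Schur_Decomposition"
    "Jordan_Normal_Form.Gauss_Jordan_Elimination" "Jordan_Normal_Form.Determinant"
begin

text \<open>A multi-channel signal collection Z in R^{C x T x m} is represented as a function
  Z c t i (channel c < C, time t < T, signal i < m); values outside these bounds are irrelevant.\<close>

type_synonym sigarr = "nat \<Rightarrow> nat \<Rightarrow> nat \<Rightarrow> real"
type_synonym csigarr = "nat \<Rightarrow> nat \<Rightarrow> nat \<Rightarrow> complex"

text \<open>circ(Z) in R^{CT x Tm}: row c*T + a, column i*T + b, entry z^i[c]((a-b) mod T).\<close>
definition circZ :: "nat \<Rightarrow> nat \<Rightarrow> nat \<Rightarrow> sigarr \<Rightarrow> real mat" where
  "circZ C T m Z = mat (C * T) (T * m)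
     (\<lambda>(r, s). Z (r div T) (nat ((int (r mod T) - int (s mod T)) mod int T)) (s div T))"

text \<open>Kronecker product Pi \<otimes> I_T, of size Tm x Tm, with index i*T + b.\<close>
definition kron_id :: "nat \<Rightarrow> real mat \<Rightarrow> real mat" where
  "kron_id T P = mat (dim_row P * T) (dim_col P * T)
     (\<lambda>(r, s). if r mod T = s mod T then P $$ (r div T, s div T) else 0)"

definition omega :: "nat \<Rightarrow> complex" where
  "omega T = cis (- 2 * pi / real T)"

definition DFTZ :: "nat \<Rightarrow> nat \<Rightarrow> nat \<Rightarrow> sigarr \<Rightarrow> nat \<Rightarrow> complex mat" where
  "DFTZ C T m Z p = mat C m (\<lambda>(c, i). \<Sum>t<T. complex_of_real (Z c t i) * omega T ^ (p * t))"

definition IDFT :: "nat \<Rightarrow> (nat \<Rightarrow> complex mat) \<Rightarrow> csigarr" where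
  "IDFT T U c t i = (1 / of_nat T) * (\<Sum>p<T. (U p) $$ (c, i) * inverse (omega T ^ (p * t)))"

definition perturb :: "sigarr \<Rightarrow> nat \<Rightarrow> nat \<Rightarrow> nat \<Rightarrow> real \<Rightarrow> sigarr" where
  "perturb Z c0 t0 i0 s = (\<lambda>c t i. Z c t i + (if c = c0 \<and> t = t0 \<and> i = i0 then s else 0))"

definition mat_inv :: "'a :: field mat \<Rightarrow> 'a mat" where
  "mat_inv A = the (mat_inverse A)"

end

theory Submission
  imports Defs
begin

text \<open>
  circ(Z) is block circulant, so the DFT block-diagonalises it: writing block_circ X for the
  block circulant matrix whose Fourier slices are X p, X \<mapsto> block_circ X is multiplicative,
  circ(Z) = block_circ (DFT Z), circ(Z)^T = block_circ (DFT Z)^* and \<Pi> \<otimes> I = block_circ \<Pi>.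

  Perturbing one entry of Z moves circ(Z) to A + s E, and by Jacobi's formula the derivative of
  log det M, M = 1 + a A K A^T, is tr(a (E K A^T + A K E^T) adj M) / det M.  As M and K are
  symmetric this equals 2 \<langle>E, G\<rangle> for every G with M G = a A K.  In the Fourier domain such a G is
  block_circ of the frequency-wise resolvents a S(p)^-1 DFT(Z)(p) \<Pi>, where S(p) is invertible
  because it is the identity plus a positive semidefinite matrix, and pairing it with the
  indicator pattern E reads off T times the inverse DFT at the perturbed entry.
\<close>

section \<open>Roots of unity\<close>

definition unit_root :: "nat \<Rightarrow> int \<Rightarrow> complex" where
  "unit_root T k = cis (2 * pi * of_int k / real T)"

lemma unit_root_add: "unit_root T x * unit_root T y = unit_root T (x + y)"
  unfolding unit_root_def by (simp add: cis_mult add_divide_distrib algebra_simps)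

lemma unit_root_multiple:
  assumes "T > 0" "int T dvd k" shows "unit_root T k = 1"
proof -
  obtain j where "k = int T * j" using assms(2) by (elim dvdE)
  hence "2 * pi * of_int k / real T = 2 * pi * of_int j" using assms(1) by simp
  thus ?thesis unfolding unit_root_def by simp
qed

lemma unit_root_mod: "T > 0 \<Longrightarrow> unit_root T (k mod int T) = unit_root T k"
  using unit_root_add [of T "k mod int T" "int T * (k div int T)"] by (simp add: unit_root_multiple)

lemma unit_root_eq_1D:
  assumes "T > 0" "unit_root T k = 1" shows "int T dvd k"
proof -
  have "exp (\<i> * complex_of_real (2 * pi * of_int k / real T)) = 1"
    using assms(2) unfolding unit_root_def cis_conv_exp by simp
  then obtain n :: int where "2 * pi * of_int k / real T = of_int (2 * n) * pi"
    by (auto simp: exp_eq_1)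
  hence "real_of_int k = real_of_int (int T * n)" using assms(1) by (simp add: field_simps)
  thus ?thesis by (simp only: of_int_eq_iff) simp
qed

lemma unit_root_power: "unit_root T k ^ n = unit_root T (k * int n)"
  unfolding unit_root_def Complex.DeMoivre by (simp add: algebra_simps)

lemma cnj_unit_root: "cnj (unit_root T k) = unit_root T (- k)"
  unfolding unit_root_def by (simp add: cis_cnj)

lemma omega_power: "omega T ^ n = unit_root T (- int n)"
  unfolding omega_def unit_root_def Complex.DeMoivre by (simp add: algebra_simps)

lemma inverse_omega_power: "inverse (omega T ^ n) = unit_root T (int n)"
  unfolding omega_power unit_root_def by simp

lemma sum_unit_root:
  assumes "T > 0"
  shows "(\<Sum>b<T. unit_root T (k * int b)) = (if int T dvd k then of_nat T else 0)"
proof (cases "int T dvd k")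
  case True
  thus ?thesis using assms by (simp add: unit_root_multiple)
next
  case False
  hence "unit_root T k \<noteq> 1" using unit_root_eq_1D assms by blast
  moreover have "unit_root T k ^ T = 1" using assms by (simp add: unit_root_power unit_root_multiple)
  ultimately show ?thesis using False by (simp add: unit_root_power [symmetric] sum_gp_strict)
qed

lemma sum_unit_root_lag:
  assumes "T > 0" "a < T" "b < T"
  shows "(\<Sum>p<T. unit_root T ((int a - int b) * int p)) = (if a = b then of_nat T else 0)"
proof -
  have "int T dvd (int a - int b) \<longleftrightarrow> a = b"
    using assms by (auto simp: mod_eq_dvd_iff [symmetric])
  thus ?thesis using sum_unit_root [OF assms(1)] by simp
qed

text \<open>The discrete convolution theorem, written with the Fourier kernels explicit.\<close>
lemma sum_fourier_product:
  assumes T: "T > 0"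
  shows "(\<Sum>b<T. (\<Sum>p<T. f p * unit_root T (int p * (a - int b)))
                 * (\<Sum>q<T. g q * unit_root T (int q * (int b - d))))
       = of_nat T * (\<Sum>p<T. f p * g p * unit_root T (int p * (a - d)))"
proof -
  define h where "h p q = f p * g q * unit_root T (int p * a - int q * d)" for p q
  have kernel: "(f p * unit_root T (int p * (a - int b))) * (g q * unit_root T (int q * (int b - d)))
      = h p q * unit_root T ((int q - int p) * int b)" for p q b
  proof -
    have "unit_root T (int p * (a - int b)) * unit_root T (int q * (int b - d))
        = unit_root T (int p * a - int q * d) * unit_root T ((int q - int p) * int b)"
      by (simp add: unit_root_add algebra_simps)
    thus ?thesis unfolding h_def by (metis (no_types, lifting) mult.assoc mult.left_commute)
  qed
  have delta: "(\<Sum>q<T. h p q * (\<Sum>b<T. unit_root T ((int q - int p) * int b))) = h p p * of_nat T"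
    if "p < T" for p
  proof -
    have "(\<Sum>q<T. h p q * (\<Sum>b<T. unit_root T ((int q - int p) * int b)))
        = (\<Sum>q<T. if q = p then h p q * of_nat T else 0)"
      using T that by (intro sum.cong refl) (simp add: sum_unit_root_lag)
    thus ?thesis using that by simp
  qed
  have "(\<Sum>b<T. (\<Sum>p<T. f p * unit_root T (int p * (a - int b)))
                 * (\<Sum>q<T. g q * unit_root T (int q * (int b - d))))
      = (\<Sum>b<T. \<Sum>p<T. \<Sum>q<T. h p q * unit_root T ((int q - int p) * int b))"
    by (simp only: sum_product kernel)
  also have "\<dots> = (\<Sum>p<T. \<Sum>q<T. \<Sum>b<T. h p q * unit_root T ((int q - int p) * int b))"
    by (subst sum.swap) (intro sum.cong refl sum.swap)
  also have "\<dots> = (\<Sum>p<T. h p p * of_nat T)"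
    by (intro sum.cong refl) (simp add: sum_distrib_left [symmetric] delta)
  also have "\<dots> = of_nat T * (\<Sum>p<T. f p * g p * unit_root T (int p * (a - d)))"
    unfolding sum_distrib_left h_def by (intro sum.cong refl) (simp add: right_diff_distrib mult.commute)
  finally show ?thesis .
qed

section \<open>Block circulant matrices\<close>

lemma block_index_less:
  fixes i n b T :: nat assumes "i < n" "b < T" shows "i * T + b < n * T"
proof -
  have "i * T + b < Suc i * T" using assms(2) by simp
  also have "\<dots> \<le> n * T" using assms(1) by (intro mult_le_mono1) simp
  finally show ?thesis .
qed

lemma obtain_block_index:
  fixes r n T :: nat assumes "r < n * T"
  obtains i a where "r = i * T + a" "i < n" "a < T"
proof
  show "r = r div T * T + r mod T" by simp
  show "r div T < n" using assms by (simp add: less_mult_imp_div_less)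
  show "r mod T < T" using assms by (cases "T = 0") simp_all
qed

lemma sum_lessThan_mult_blocks:
  fixes n T :: nat shows "(\<Sum>u<n * T. f u) = (\<Sum>i<n. \<Sum>b<T. f (i * T + b))"
proof -
  have "(\<Sum>u<n * T. f u) = (\<Sum>i<n. sum f {i * T..<i * T + T})" using sum.nat_group [of f T n] by simp
  thus ?thesis by (simp add: sum.atLeastLessThan_shift_0 atLeast0LessThan comp_def)
qed

lemma index_mult_mat_sum:
  "A \<in> carrier_mat n k \<Longrightarrow> B \<in> carrier_mat k l \<Longrightarrow> i < n \<Longrightarrow> j < l
    \<Longrightarrow> (A * B) $$ (i, j) = (\<Sum>u<k. A $$ (i, u) * B $$ (u, j))"
  by (simp add: scalar_prod_def atLeast0LessThan)

text \<open>The block circulant matrix with Fourier slices X p: block (i, j) is the T x T circulant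
  generated by the inverse DFT of the (i, j) entries of the slices.\<close>
definition block_circ :: "nat \<Rightarrow> nat \<Rightarrow> nat \<Rightarrow> (nat \<Rightarrow> complex mat) \<Rightarrow> complex mat" where
  "block_circ T n1 n2 X = mat (n1 * T) (n2 * T) (\<lambda>(r, s). (1 / of_nat T) *
     (\<Sum>p<T. X p $$ (r div T, s div T) * unit_root T (int p * (int (r mod T) - int (s mod T)))))"

lemma block_circ_carrier [simp]: "block_circ T n1 n2 X \<in> carrier_mat (n1 * T) (n2 * T)"
  and dim_block_circ [simp]: "dim_row (block_circ T n1 n2 X) = n1 * T" "dim_col (block_circ T n1 n2 X) = n2 * T"
  unfolding block_circ_def by simp_all

lemma index_block_circ:
  assumes "i < n1" "j < n2" "a < T" "b < T"
  shows "block_circ T n1 n2 X $$ (i * T + a, j * T + b)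
     = (1 / of_nat T) * (\<Sum>p<T. X p $$ (i, j) * unit_root T (int p * (int a - int b)))"
  using assms by (simp add: block_circ_def block_index_less)

lemma block_circ_mult:
  assumes T: "T > 0"
    and X: "\<And>p. p < T \<Longrightarrow> X p \<in> carrier_mat n1 n2" and Y: "\<And>p. p < T \<Longrightarrow> Y p \<in> carrier_mat n2 n3"
  shows "block_circ T n1 n2 X * block_circ T n2 n3 Y = block_circ T n1 n3 (\<lambda>p. X p * Y p)"
proof (rule eq_matI)
  fix r s assume "r < dim_row (block_circ T n1 n3 (\<lambda>p. X p * Y p))" "s < dim_col (block_circ T n1 n3 (\<lambda>p. X p * Y p))"
  then obtain i a l d where r: "r = i * T + a" "i < n1" "a < T" and s: "s = l * T + d" "l < n3" "d < T"
    by (auto elim!: obtain_block_index)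
  define c :: complex where "c = 1 / of_nat T"
  have "(block_circ T n1 n2 X * block_circ T n2 n3 Y) $$ (r, s)
      = (\<Sum>u<n2 * T. block_circ T n1 n2 X $$ (r, u) * block_circ T n2 n3 Y $$ (u, s))"
    using r s by (intro index_mult_mat_sum) (auto simp: block_index_less)
  also have "\<dots> = (\<Sum>j<n2. \<Sum>b<T. block_circ T n1 n2 X $$ (r, j * T + b) * block_circ T n2 n3 Y $$ (j * T + b, s))"
    by (rule sum_lessThan_mult_blocks)
  also have "\<dots> = (\<Sum>j<n2. \<Sum>b<T. (c * (\<Sum>p<T. X p $$ (i, j) * unit_root T (int p * (int a - int b))))
                                * (c * (\<Sum>q<T. Y q $$ (j, l) * unit_root T (int q * (int b - int d)))))"
    using r s by (intro sum.cong refl) (simp add: index_block_circ c_def)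
  also have "\<dots> = (\<Sum>j<n2. c * c * (\<Sum>b<T. (\<Sum>p<T. X p $$ (i, j) * unit_root T (int p * (int a - int b)))
                                    * (\<Sum>q<T. Y q $$ (j, l) * unit_root T (int q * (int b - int d)))))"
  proof -
    have "(\<Sum>b<T. (c * A b) * (c * B b)) = c * c * (\<Sum>b<T. A b * B b)" for A B :: "nat \<Rightarrow> complex"
      by (simp add: sum_distrib_left mult_ac)
    thus ?thesis by (simp only:)
  qed
  also have "\<dots> = (\<Sum>j<n2. c * c * of_nat T * (\<Sum>p<T. X p $$ (i, j) * Y p $$ (j, l) * unit_root T (int p * (int a - int d))))"
    using T by (simp add: sum_fourier_product mult.assoc)
  also have "\<dots> = c * (\<Sum>p<T. (\<Sum>j<n2. X p $$ (i, j) * Y p $$ (j, l)) * unit_root T (int p * (int a - int d)))"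
    using T unfolding sum_distrib_left sum_distrib_right c_def
    by (subst sum.swap) (simp add: mult_ac)
  also have "\<dots> = block_circ T n1 n3 (\<lambda>p. X p * Y p) $$ (r, s)"
  proof -
    have "(X p * Y p) $$ (i, l) = (\<Sum>j<n2. X p $$ (i, j) * Y p $$ (j, l))" if "p < T" for p
      using X [OF that] Y [OF that] r s by (intro index_mult_mat_sum) auto
    thus ?thesis using r s by (simp add: index_block_circ c_def)
  qed
  finally show "(block_circ T n1 n2 X * block_circ T n2 n3 Y) $$ (r, s) = block_circ T n1 n3 (\<lambda>p. X p * Y p) $$ (r, s)" .
qed auto

lemma block_circ_add:
  assumes X: "\<And>p. p < T \<Longrightarrow> X p \<in> carrier_mat n1 n2" and Y: "\<And>p. p < T \<Longrightarrow> Y p \<in> carrier_mat n1 n2"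
  shows "block_circ T n1 n2 (\<lambda>p. X p + Y p) = block_circ T n1 n2 X + block_circ T n1 n2 Y"
proof (rule eq_matI)
  fix r s assume "r < dim_row (block_circ T n1 n2 X + block_circ T n1 n2 Y)"
    "s < dim_col (block_circ T n1 n2 X + block_circ T n1 n2 Y)"
  then obtain i a j b where r: "r = i * T + a" "i < n1" "a < T" and s: "s = j * T + b" "j < n2" "b < T"
    by (auto elim!: obtain_block_index)
  have "(X p + Y p) $$ (i, j) = X p $$ (i, j) + Y p $$ (i, j)" if "p < T" for p
    using X [OF that] Y [OF that] r s by simp
  thus "block_circ T n1 n2 (\<lambda>p. X p + Y p) $$ (r, s) = (block_circ T n1 n2 X + block_circ T n1 n2 Y) $$ (r, s)"
    unfolding r(1) s(1) using r s
    by (simp add: index_block_circ block_index_less sum.distrib distrib_right add_divide_distrib)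
qed auto

lemma block_circ_smult:
  assumes X: "\<And>p. p < T \<Longrightarrow> X p \<in> carrier_mat n1 n2"
  shows "block_circ T n1 n2 (\<lambda>p. k \<cdot>\<^sub>m X p) = k \<cdot>\<^sub>m block_circ T n1 n2 X"
proof (rule eq_matI)
  fix r s assume "r < dim_row (k \<cdot>\<^sub>m block_circ T n1 n2 X)" "s < dim_col (k \<cdot>\<^sub>m block_circ T n1 n2 X)"
  then obtain i a j b where r: "r = i * T + a" "i < n1" "a < T" and s: "s = j * T + b" "j < n2" "b < T"
    by (auto elim!: obtain_block_index)
  have "(k \<cdot>\<^sub>m X p) $$ (i, j) = k * X p $$ (i, j)" if "p < T" for p
    using X [OF that] r s by simp
  thus "block_circ T n1 n2 (\<lambda>p. k \<cdot>\<^sub>m X p) $$ (r, s) = (k \<cdot>\<^sub>m block_circ T n1 n2 X) $$ (r, s)"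
    unfolding r(1) s(1) using r s
    by (simp add: index_block_circ block_index_less sum_distrib_left mult.assoc)
qed auto

lemma block_circ_const:
  assumes T: "T > 0" and P: "P \<in> carrier_mat n1 n2"
  shows "block_circ T n1 n2 (\<lambda>p. P)
    = mat (n1 * T) (n2 * T) (\<lambda>(r, s). if r mod T = s mod T then P $$ (r div T, s div T) else 0)"
proof (rule eq_matI)
  fix r s assume "r < dim_row (mat (n1 * T) (n2 * T) (\<lambda>(r, s). if r mod T = s mod T then P $$ (r div T, s div T) else 0))"
    "s < dim_col (mat (n1 * T) (n2 * T) (\<lambda>(r, s). if r mod T = s mod T then P $$ (r div T, s div T) else 0))"
  then obtain i a j b where r: "r = i * T + a" "i < n1" "a < T" and s: "s = j * T + b" "j < n2" "b < T"
    by (auto elim!: obtain_block_index)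
  have "(\<Sum>p<T. unit_root T (int p * (int a - int b))) = (if a = b then of_nat T else 0)"
    using sum_unit_root_lag [OF T r(3) s(3)] by (simp add: mult.commute)
  hence "(\<Sum>p<T. P $$ (i, j) * unit_root T (int p * (int a - int b))) = (if a = b then P $$ (i, j) * of_nat T else 0)"
    by (simp add: sum_distrib_left [symmetric])
  thus "block_circ T n1 n2 (\<lambda>p. P) $$ (r, s)
      = mat (n1 * T) (n2 * T) (\<lambda>(r, s). if r mod T = s mod T then P $$ (r div T, s div T) else 0) $$ (r, s)"
    unfolding r(1) s(1) using r s T by (simp add: index_block_circ block_index_less)
qed auto

lemma block_circ_one:
  assumes "T > 0" shows "block_circ T n n (\<lambda>p. 1\<^sub>m n) = 1\<^sub>m (n * T)"
proof (rule eq_matI)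
  fix r s assume "r < dim_row (1\<^sub>m (n * T) :: complex mat)" "s < dim_col (1\<^sub>m (n * T) :: complex mat)"
  hence r: "r < n * T" and s: "s < n * T" by auto
  moreover have "r mod T = s mod T \<and> r div T = s div T \<longleftrightarrow> r = s"
    by (metis div_mult_mod_eq)
  ultimately show "block_circ T n n (\<lambda>p. 1\<^sub>m n) $$ (r, s) = 1\<^sub>m (n * T) $$ (r, s)"
    unfolding block_circ_const [OF assms one_carrier_mat] by (auto simp: less_mult_imp_div_less)
qed auto

lemma kron_id_eq_block_circ:
  assumes "T > 0" "P \<in> carrier_mat m m"
  shows "map_mat complex_of_real (kron_id T P) = block_circ T m m (\<lambda>p. map_mat complex_of_real P)"
  using assms by (subst block_circ_const) (auto simp: kron_id_def less_mult_imp_div_less)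

lemma mat_adjoint_eq_mat:
  "mat_adjoint (A :: complex mat) = mat (dim_col A) (dim_row A) (\<lambda>(i, j). cnj (A $$ (j, i)))"
  by (rule eq_matI) (auto simp: mat_adjoint_def mat_of_rows_def)

lemma index_mat_adjoint [simp]:
  "i < dim_col A \<Longrightarrow> j < dim_row A \<Longrightarrow> mat_adjoint (A :: complex mat) $$ (i, j) = cnj (A $$ (j, i))"
  and mat_adjoint_carrier [simp]: "mat_adjoint A \<in> carrier_mat (dim_col A) (dim_row A)"
  by (simp_all add: mat_adjoint_eq_mat)

lemma dim_mat_adjoint [simp]:
  "dim_row (mat_adjoint (A :: complex mat)) = dim_col A" "dim_col (mat_adjoint A) = dim_row A"
  by (simp_all add: mat_adjoint_eq_mat)

lemma index_DFTZ:
  "c < C \<Longrightarrow> i < m \<Longrightarrow> DFTZ C T m Z p $$ (c, i) = (\<Sum>t<T. complex_of_real (Z c t i) * unit_root T (- (int p * int t)))"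
  unfolding DFTZ_def by (simp add: omega_power)

lemma DFTZ_carrier [simp]: "DFTZ C T m Z p \<in> carrier_mat C m"
  and dim_DFTZ [simp]: "dim_row (DFTZ C T m Z p) = C" "dim_col (DFTZ C T m Z p) = m"
  unfolding DFTZ_def by simp_all

lemma circZ_carrier [simp]: "circZ C T m Z \<in> carrier_mat (C * T) (m * T)"
  unfolding circZ_def by (simp add: mult.commute)

lemma dim_circZ [simp]: "dim_row (circZ C T m Z) = C * T" "dim_col (circZ C T m Z) = m * T"
  unfolding circZ_def by (simp_all add: mult.commute)

lemma index_circZ:
  assumes "c < C" "i < m" "a < T" "b < T"
  shows "circZ C T m Z $$ (c * T + a, i * T + b) = Z c (nat ((int a - int b) mod int T)) i"
proof -
  have "c * T + a < C * T" "i * T + b < T * m"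
    using block_index_less [OF assms(1,3)] block_index_less [OF assms(2,4)] by (simp_all add: mult.commute)
  moreover have "(c * T + a) div T = c" "(c * T + a) mod T = a" "(i * T + b) div T = i" "(i * T + b) mod T = b"
    using assms by simp_all
  ultimately show ?thesis unfolding circZ_def by simp
qed

lemma idft_dft_lag:
  assumes T: "T > 0" and "a < T" "b < T"
  shows "(1 / of_nat T) * (\<Sum>p<T. (\<Sum>t<T. complex_of_real (z t) * unit_root T (- (int p * int t)))
                                   * unit_root T (int p * (int a - int b)))
    = complex_of_real (z (nat ((int a - int b) mod int T)))"
proof -
  define t0 where "t0 = nat ((int a - int b) mod int T)"
  have t0: "t0 < T" unfolding t0_def using T by (simp add: nat_less_iff)
  have lag: "int T dvd (int a - int b - int t) \<longleftrightarrow> t = t0" if "t < T" for t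
  proof -
    have "int T dvd (int a - int b - int t) \<longleftrightarrow> (int a - int b) mod int T = int t"
      using that by (simp add: mod_eq_dvd_iff [symmetric])
    thus ?thesis unfolding t0_def using T by auto
  qed
  have kernel: "unit_root T (- (int p * int t)) * unit_root T (int p * (int a - int b))
      = unit_root T ((int a - int b - int t) * int p)" for p t
    by (simp add: unit_root_add algebra_simps)
  have "(\<Sum>p<T. (\<Sum>t<T. complex_of_real (z t) * unit_root T (- (int p * int t)))
                 * unit_root T (int p * (int a - int b)))
      = (\<Sum>p<T. \<Sum>t<T. complex_of_real (z t) * unit_root T ((int a - int b - int t) * int p))"
    by (simp only: sum_distrib_right mult.assoc kernel)
  also have "\<dots> = (\<Sum>t<T. complex_of_real (z t) * (\<Sum>p<T. unit_root T ((int a - int b - int t) * int p)))"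
    by (subst sum.swap) (simp add: sum_distrib_left)
  also have "\<dots> = (\<Sum>t<T. if t = t0 then complex_of_real (z t) * of_nat T else 0)"
    by (intro sum.cong refl) (simp add: sum_unit_root [OF T] lag)
  finally show ?thesis using T t0 by (simp add: t0_def)
qed

lemma circZ_eq_block_circ:
  assumes T: "T > 0"
  shows "map_mat complex_of_real (circZ C T m Z) = block_circ T C m (DFTZ C T m Z)"
proof (rule eq_matI)
  fix r s assume "r < dim_row (block_circ T C m (DFTZ C T m Z))" "s < dim_col (block_circ T C m (DFTZ C T m Z))"
  then obtain c a i b where r: "r = c * T + a" "c < C" "a < T" and s: "s = i * T + b" "i < m" "b < T"
    by (auto elim!: obtain_block_index)
  have "block_circ T C m (DFTZ C T m Z) $$ (r, s)
      = (1 / of_nat T) * (\<Sum>p<T. (\<Sum>t<T. complex_of_real (Z c t i) * unit_root T (- (int p * int t)))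
                                   * unit_root T (int p * (int a - int b)))"
    unfolding r(1) s(1) using r s by (simp only: index_block_circ index_DFTZ)
  also have "\<dots> = map_mat complex_of_real (circZ C T m Z) $$ (r, s)"
    unfolding idft_dft_lag [OF T r(3) s(3)] r(1) s(1) using r s
    by (simp add: index_circZ block_index_less)
  finally show "map_mat complex_of_real (circZ C T m Z) $$ (r, s) = block_circ T C m (DFTZ C T m Z) $$ (r, s)" ..
qed auto

lemma transpose_circZ_eq_block_circ:
  assumes T: "T > 0"
  shows "transpose_mat (map_mat complex_of_real (circZ C T m Z))
    = block_circ T m C (\<lambda>p. mat_adjoint (DFTZ C T m Z p))"
proof (rule eq_matI)
  fix s r assume "s < dim_row (block_circ T m C (\<lambda>p. mat_adjoint (DFTZ C T m Z p)))"
    "r < dim_col (block_circ T m C (\<lambda>p. mat_adjoint (DFTZ C T m Z p)))"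
  then obtain c a i b where r: "r = c * T + a" "c < C" "a < T" and s: "s = i * T + b" "i < m" "b < T"
    by (auto elim!: obtain_block_index)
  have conj_kernel: "unit_root T (int p * (int b - int a)) = cnj (unit_root T (int p * (int a - int b)))" for p
    by (simp add: cnj_unit_root algebra_simps)
  have "block_circ T m C (\<lambda>p. mat_adjoint (DFTZ C T m Z p)) $$ (i * T + b, c * T + a)
      = (1 / of_nat T) * (\<Sum>p<T. cnj (DFTZ C T m Z p $$ (c, i)) * unit_root T (int p * (int b - int a)))"
    using r s by (simp add: index_block_circ)
  also have "\<dots> = cnj ((1 / of_nat T) * (\<Sum>p<T. DFTZ C T m Z p $$ (c, i) * unit_root T (int p * (int a - int b))))"
    by (simp only: conj_kernel cnj_sum complex_cnj_mult complex_cnj_divide complex_cnj_one complex_cnj_of_nat)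
  finally have "block_circ T m C (\<lambda>p. mat_adjoint (DFTZ C T m Z p)) $$ (s, r)
      = cnj ((1 / of_nat T) * (\<Sum>p<T. DFTZ C T m Z p $$ (c, i) * unit_root T (int p * (int a - int b))))"
    using r s by simp
  also have "\<dots> = cnj (map_mat complex_of_real (circZ C T m Z) $$ (r, s))"
    unfolding circZ_eq_block_circ [OF T] r(1) s(1) using r s by (simp only: index_block_circ)
  also have "\<dots> = transpose_mat (map_mat complex_of_real (circZ C T m Z)) $$ (s, r)"
    using r s by (simp add: block_index_less)
  finally show "transpose_mat (map_mat complex_of_real (circZ C T m Z)) $$ (s, r)
      = block_circ T m C (\<lambda>p. mat_adjoint (DFTZ C T m Z p)) $$ (s, r)" ..
qed auto

section \<open>Jacobi's formula\<close>

definition mat_trace :: "'a :: comm_ring_1 mat \<Rightarrow> 'a" where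
  "mat_trace A = (\<Sum>k<dim_row A. A $$ (k, k))"

lemma det_mat_eq_sum_permutes:
  "det (mat n n g) = (\<Sum>p\<in>{p. p permutes {0..<n}}. signof p * (\<Prod>i\<in>{0..<n}. g (i, p i)))"
proof -
  have "det (mat n n g) = (\<Sum>p\<in>{p. p permutes {0..<n}}. signof p * (\<Prod>i=0..<n. mat n n g $$ (i, p i)))"
    by (rule det_def') simp
  also have "\<dots> = (\<Sum>p\<in>{p. p permutes {0..<n}}. signof p * (\<Prod>i\<in>{0..<n}. g (i, p i)))"
    by (intro sum.cong refl arg_cong [where f = "(*) _"] prod.cong) (auto simp: permutes_in_image)
  finally show ?thesis .
qed

lemma has_real_derivative_det_rows:
  fixes f :: "real \<Rightarrow> nat \<Rightarrow> nat \<Rightarrow> real"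
  assumes d: "\<And>i j. i < n \<Longrightarrow> j < n \<Longrightarrow> ((\<lambda>s. f s i j) has_real_derivative f' i j) (at x)"
  shows "((\<lambda>s. det (mat n n (\<lambda>(i, j). f s i j))) has_real_derivative
     (\<Sum>k<n. det (mat n n (\<lambda>(i, j). if i = k then f' i j else f x i j)))) (at x)"
proof -
  let ?P = "{p. p permutes {0..<n}}"
  have "((\<lambda>s. \<Sum>p\<in>?P. signof p * (\<Prod>i\<in>{0..<n}. f s i (p i))) has_real_derivative
     (\<Sum>p\<in>?P. signof p * (\<Sum>k\<in>{0..<n}. f' k (p k) * (\<Prod>i\<in>{0..<n} - {k}. f x i (p i))))) (at x)"
  proof (intro DERIV_sum DERIV_cmult has_field_derivative_prod)
    fix p k assume "p \<in> ?P" "k \<in> {0..<n}"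
    thus "((\<lambda>s. f s k (p k)) has_real_derivative f' k (p k)) (at x)"
      by (intro d) (auto simp: permutes_in_image)
  qed
  moreover have "(\<Sum>p\<in>?P. signof p * (\<Sum>k\<in>{0..<n}. f' k (p k) * (\<Prod>i\<in>{0..<n} - {k}. f x i (p i))))
      = (\<Sum>k<n. det (mat n n (\<lambda>(i, j). if i = k then f' i j else f x i j)))"
  proof -
    have row_k: "f' k (p k) * (\<Prod>i\<in>{0..<n} - {k}. f x i (p i))
        = (\<Prod>i\<in>{0..<n}. if i = k then f' i (p i) else f x i (p i))" if "k \<in> {0..<n}" for p k
    proof -
      have "(\<Prod>i\<in>{0..<n} - {k}. if i = k then f' i (p i) else f x i (p i)) = (\<Prod>i\<in>{0..<n} - {k}. f x i (p i))"
        by (intro prod.cong) auto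
      thus ?thesis using that by (simp add: prod.remove [of "{0..<n}" k])
    qed
    have "(\<Sum>p\<in>?P. signof p * (\<Sum>k\<in>{0..<n}. f' k (p k) * (\<Prod>i\<in>{0..<n} - {k}. f x i (p i))))
        = (\<Sum>p\<in>?P. \<Sum>k\<in>{0..<n}. signof p * (\<Prod>i\<in>{0..<n}. if i = k then f' i (p i) else f x i (p i)))"
      by (intro sum.cong refl) (simp add: sum_distrib_left row_k)
    also have "\<dots> = (\<Sum>k\<in>{0..<n}. \<Sum>p\<in>?P. signof p * (\<Prod>i\<in>{0..<n}. if i = k then f' i (p i) else f x i (p i)))"
      by (rule sum.swap)
    finally show ?thesis unfolding det_mat_eq_sum_permutes by (simp add: atLeast0LessThan)
  qed
  ultimately show ?thesis unfolding det_mat_eq_sum_permutes by simp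
qed

lemma det_replace_row:
  assumes M: "M \<in> carrier_mat n n" and k: "k < n"
  shows "det (mat n n (\<lambda>(i, j). if i = k then N $$ (i, j) else M $$ (i, j))) = (\<Sum>j<n. N $$ (k, j) * cofactor M k j)"
proof -
  let ?B = "mat n n (\<lambda>(i, j). if i = k then N $$ (i, j) else M $$ (i, j))"
  have "mat_delete ?B k j = mat_delete M k j" if "j < n" for j
    using M k that by (intro eq_matI) (auto simp: mat_delete_def)
  hence "?B $$ (k, j) * cofactor ?B k j = N $$ (k, j) * cofactor M k j" if "j < n" for j
    using that k by (simp add: cofactor_def)
  thus ?thesis using laplace_expansion_row [of ?B n k] k by simp
qed

lemma has_real_derivative_det:
  fixes M :: "real \<Rightarrow> real mat"
  assumes M: "\<And>s. M s \<in> carrier_mat n n" and M': "M' \<in> carrier_mat n n"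
    and d: "\<And>i j. i < n \<Longrightarrow> j < n \<Longrightarrow> ((\<lambda>s. M s $$ (i, j)) has_real_derivative M' $$ (i, j)) (at x)"
  shows "((\<lambda>s. det (M s)) has_real_derivative mat_trace (M' * adj_mat (M x))) (at x)"
proof -
  have M_eq: "M s = mat n n (\<lambda>(i, j). M s $$ (i, j))" for s
    using M [of s] by (intro eq_matI) auto
  have "(\<Sum>k<n. det (mat n n (\<lambda>(i, j). if i = k then M' $$ (i, j) else M x $$ (i, j))))
      = (\<Sum>k<n. \<Sum>j<n. M' $$ (k, j) * cofactor (M x) k j)"
    using M by (intro sum.cong refl det_replace_row) auto
  also have "\<dots> = mat_trace (M' * adj_mat (M x))"
  proof -
    have adj: "adj_mat (M x) \<in> carrier_mat n n" using adj_mat (1) [OF M] .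
    have "(M' * adj_mat (M x)) $$ (k, k) = (\<Sum>j<n. M' $$ (k, j) * cofactor (M x) k j)" if "k < n" for k
      using index_mult_mat_sum [OF M' adj that that] M [of x] that by (simp add: adj_mat_def)
    thus ?thesis using M' by (simp add: mat_trace_def)
  qed
  finally show ?thesis
    using has_real_derivative_det_rows [of n "\<lambda>s i j. M s $$ (i, j)" "\<lambda>i j. M' $$ (i, j)" x] d
    by (subst M_eq) simp
qed

section \<open>Definiteness of 1 + a F P F^*\<close>

lemma index_mult_diagonal:
  assumes P: "P \<in> carrier_mat q q" "diagonal_mat P" and F: "F \<in> carrier_mat n q" and "c < n" "j < q"
  shows "(F * map_mat complex_of_real P) $$ (c, j) = F $$ (c, j) * complex_of_real (P $$ (j, j))"
proof -
  have "(F * map_mat complex_of_real P) $$ (c, j) = (\<Sum>l<q. F $$ (c, l) * map_mat complex_of_real P $$ (l, j))"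
    using assms by (intro index_mult_mat_sum) auto
  also have "\<dots> = (\<Sum>l<q. if l = j then F $$ (c, j) * complex_of_real (P $$ (j, j)) else 0)"
    using assms unfolding diagonal_mat_def by (intro sum.cong refl) auto
  finally show ?thesis using assms by simp
qed

lemma quadratic_form_gram_nonneg:
  assumes F: "F \<in> carrier_mat n q" and P: "P \<in> carrier_mat q q" "diagonal_mat P" "\<forall>j<q. P $$ (j, j) \<ge> 0"
    and v: "v \<in> carrier_vec n"
  shows "0 \<le> Re (\<Sum>c<n. cnj (v $ c) * ((F * map_mat complex_of_real P * mat_adjoint F) *\<^sub>v v) $ c)"
proof -
  define w where "w j = (\<Sum>k<n. cnj (F $$ (k, j)) * v $ k)" for j
  define X where "X = F * map_mat complex_of_real P * mat_adjoint F"
  have X: "X \<in> carrier_mat n n" unfolding X_def using F P by auto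
  have "X $$ (c, k) = (\<Sum>j<q. F $$ (c, j) * complex_of_real (P $$ (j, j)) * cnj (F $$ (k, j)))"
    if "c < n" "k < n" for c k
  proof -
    have "X $$ (c, k) = (\<Sum>j<q. (F * map_mat complex_of_real P) $$ (c, j) * mat_adjoint F $$ (j, k))"
      unfolding X_def using F P that by (intro index_mult_mat_sum) auto
    thus ?thesis using F P that by (simp add: index_mult_diagonal del: index_mult_mat(1))
  qed
  hence "(\<Sum>c<n. cnj (v $ c) * (X *\<^sub>v v) $ c)
      = (\<Sum>c<n. \<Sum>k<n. \<Sum>j<q. cnj (v $ c) * F $$ (c, j) * complex_of_real (P $$ (j, j)) * cnj (F $$ (k, j)) * v $ k)"
    using X v by (simp add: scalar_prod_def atLeast0LessThan sum_distrib_left sum_distrib_right mult.assoc)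
  also have "\<dots> = (\<Sum>j<q. complex_of_real (P $$ (j, j)) * (cnj (w j) * w j))"
    by (simp add: w_def cnj_sum sum_product sum_distrib_left mult_ac sum.swap [of _ "{..<q}"]
        sum.swap [where A = "{..<n}" and B = "{..<q}"])
  also have "\<dots> = complex_of_real (\<Sum>j<q. P $$ (j, j) * (cmod (w j))\<^sup>2)"
    unfolding of_real_sum by (intro sum.cong refl) (simp only: of_real_mult complex_norm_square mult.commute)
  finally have "(\<Sum>c<n. cnj (v $ c) * (X *\<^sub>v v) $ c) = complex_of_real (\<Sum>j<q. P $$ (j, j) * (cmod (w j))\<^sup>2)" .
  thus ?thesis using P(3) unfolding X_def by (auto intro!: sum_nonneg)
qed

lemma det_one_plus_gram_nonzero:
  assumes F: "F \<in> carrier_mat n q" and P: "P \<in> carrier_mat q q" "diagonal_mat P" "\<forall>j<q. P $$ (j, j) \<ge> 0"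
    and a: "a \<ge> 0"
  shows "det (1\<^sub>m n + complex_of_real a \<cdot>\<^sub>m (F * map_mat complex_of_real P * mat_adjoint F)) \<noteq> 0"
proof
  define X where "X = F * map_mat complex_of_real P * mat_adjoint F"
  have X: "X \<in> carrier_mat n n" unfolding X_def using F P by auto
  assume "det (1\<^sub>m n + complex_of_real a \<cdot>\<^sub>m (F * map_mat complex_of_real P * mat_adjoint F)) = 0"
  then obtain v where v: "v \<in> carrier_vec n" "v \<noteq> 0\<^sub>v n" and kernel: "(1\<^sub>m n + complex_of_real a \<cdot>\<^sub>m X) *\<^sub>v v = 0\<^sub>v n"
    using det_0_iff_vec_prod_zero_field [of "1\<^sub>m n + complex_of_real a \<cdot>\<^sub>m X" n] X unfolding X_def by auto
  have "v $ c + complex_of_real a * (X *\<^sub>v v) $ c = 0" if "c < n" for c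
    using arg_cong [OF kernel, of "\<lambda>w. w $ c"] X v that by (simp add: add_mult_distrib_mat_vec [of _ n n])
  hence "(\<Sum>c<n. cnj (v $ c) * (v $ c + complex_of_real a * (X *\<^sub>v v) $ c)) = 0" by simp
  moreover have "(\<Sum>c<n. cnj (v $ c) * (v $ c + complex_of_real a * (X *\<^sub>v v) $ c))
      = (\<Sum>c<n. cnj (v $ c) * v $ c) + complex_of_real a * (\<Sum>c<n. cnj (v $ c) * (X *\<^sub>v v) $ c)"
    by (simp add: sum.distrib sum_distrib_left distrib_left mult_ac)
  moreover have "(\<Sum>c<n. cnj (v $ c) * v $ c) = complex_of_real (\<Sum>c<n. (cmod (v $ c))\<^sup>2)"
    unfolding of_real_sum complex_norm_square by (simp add: mult.commute)
  ultimately have "complex_of_real (\<Sum>c<n. (cmod (v $ c))\<^sup>2) + complex_of_real a * (\<Sum>c<n. cnj (v $ c) * (X *\<^sub>v v) $ c) = 0"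
    by simp
  from arg_cong [where f = Re, OF this]
  have "(\<Sum>c<n. (cmod (v $ c))\<^sup>2) + a * Re (\<Sum>c<n. cnj (v $ c) * (X *\<^sub>v v) $ c) = 0"
    by (simp only: plus_complex.sel times_complex.sel Re_complex_of_real Im_complex_of_real zero_complex.sel
        mult_zero_left diff_zero)
  moreover have "0 \<le> Re (\<Sum>c<n. cnj (v $ c) * (X *\<^sub>v v) $ c)"
    unfolding X_def by (rule quadratic_form_gram_nonneg [OF F P v(1)])
  ultimately have "(\<Sum>c<n. (cmod (v $ c))\<^sup>2) = 0"
    using a by (smt (verit) mult_nonneg_nonneg sum_nonneg zero_le_power2)
  hence "v = 0\<^sub>v n" using v(1) by (intro eq_vecI) (auto simp: sum_nonneg_eq_0_iff)
  thus False using v(2) by contradiction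
qed

lemma mat_inv_right:
  assumes S: "S \<in> carrier_mat n n" and "det S \<noteq> (0 :: 'a :: field)"
  shows "S * mat_inv S = 1\<^sub>m n" "mat_inv S \<in> carrier_mat n n"
proof -
  have "S \<in> Units (ring_mat TYPE('a) n ())" by (rule det_non_zero_imp_unit [OF assms])
  then obtain B where B: "mat_inverse S = Some B"
    using mat_inverse (1) [OF S, where b = "()"] by (cases "mat_inverse S") auto
  from mat_inverse (2) [OF S B] B show "S * mat_inv S = 1\<^sub>m n" "mat_inv S \<in> carrier_mat n n"
    by (auto simp: mat_inv_def)
qed

lemma map_mat_of_real_gram:
  fixes A K :: "real mat"
  assumes A: "A \<in> carrier_mat n q" and K: "K \<in> carrier_mat q q"
  shows "map_mat complex_of_real (1\<^sub>m n + a \<cdot>\<^sub>m (A * K * transpose_mat A))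
    = 1\<^sub>m n + complex_of_real a \<cdot>\<^sub>m (map_mat complex_of_real A * map_mat complex_of_real K
                                      * transpose_mat (map_mat complex_of_real A))"
proof -
  have "map_mat complex_of_real (A * K * transpose_mat A)
      = map_mat complex_of_real (A * K) * map_mat complex_of_real (transpose_mat A)"
    using A K by (intro of_real_hom.mat_hom_mult [of _ n q]) auto
  also have "map_mat complex_of_real (A * K) = map_mat complex_of_real A * map_mat complex_of_real K"
    using A K by (intro of_real_hom.mat_hom_mult [of _ n q]) auto
  also have "map_mat complex_of_real (transpose_mat A) = transpose_mat (map_mat complex_of_real A)"
    by (intro eq_matI) auto
  finally have gram: "map_mat complex_of_real (A * K * transpose_mat A)
      = map_mat complex_of_real A * map_mat complex_of_real K * transpose_mat (map_mat complex_of_real A)" .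
  have "map_mat complex_of_real (1\<^sub>m n + a \<cdot>\<^sub>m X) = 1\<^sub>m n + complex_of_real a \<cdot>\<^sub>m map_mat complex_of_real X"
    if "X \<in> carrier_mat n n" for X :: "real mat"
    using that by (intro eq_matI) auto
  moreover have "A * K * transpose_mat A \<in> carrier_mat n n" using A K by auto
  ultimately show ?thesis unfolding gram [symmetric] by blast
qed

lemma mat_adjoint_of_real: "mat_adjoint (map_mat complex_of_real A) = transpose_mat (map_mat complex_of_real A)"
  by (intro eq_matI) auto

lemma det_pos_of_nonzero_on_segment:
  fixes B :: "real mat"
  assumes B: "B \<in> carrier_mat n n" and nonzero: "\<And>s. 0 \<le> s \<Longrightarrow> s \<le> 1 \<Longrightarrow> det (1\<^sub>m n + s \<cdot>\<^sub>m B) \<noteq> 0"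
  shows "det (1\<^sub>m n + B) > 0"
proof (rule ccontr)
  define h where "h s = det (1\<^sub>m n + s \<cdot>\<^sub>m B)" for s
  have "(h has_real_derivative mat_trace (B * adj_mat (1\<^sub>m n + s \<cdot>\<^sub>m B))) (at s)" for s
    unfolding h_def using B by (intro has_real_derivative_det) (auto intro!: derivative_eq_intros)
  hence cont: "continuous_on {0..1} h" by (meson DERIV_isCont continuous_at_imp_continuous_on)
  assume "\<not> det (1\<^sub>m n + B) > 0"
  moreover have "1 \<cdot>\<^sub>m B = B" "1\<^sub>m n + 0 \<cdot>\<^sub>m B = 1\<^sub>m n" using B by auto
  ultimately have "h 1 \<le> 0" "h 0 = 1" unfolding h_def by auto
  then obtain s where "0 \<le> s" "s \<le> 1" "h s = 0"
    using IVT2' [of h 1 0 0] cont by auto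
  thus False using nonzero unfolding h_def by blast
qed

lemma det_one_plus_gram_pos:
  fixes A K :: "real mat"
  assumes A: "A \<in> carrier_mat n q" and K: "K \<in> carrier_mat q q" "diagonal_mat K" "\<forall>j<q. K $$ (j, j) \<ge> 0"
    and a: "a \<ge> 0"
  shows "det (1\<^sub>m n + a \<cdot>\<^sub>m (A * K * transpose_mat A)) > 0"
proof (rule det_pos_of_nonzero_on_segment)
  show "a \<cdot>\<^sub>m (A * K * transpose_mat A) \<in> carrier_mat n n" using A K by auto
  fix s :: real assume "0 \<le> s" "s \<le> 1"
  have "s \<cdot>\<^sub>m (a \<cdot>\<^sub>m (A * K * transpose_mat A)) = (s * a) \<cdot>\<^sub>m (A * K * transpose_mat A)"
    by (intro eq_matI) auto
  hence "complex_of_real (det (1\<^sub>m n + s \<cdot>\<^sub>m (a \<cdot>\<^sub>m (A * K * transpose_mat A))))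
      = det (map_mat complex_of_real (1\<^sub>m n + (s * a) \<cdot>\<^sub>m (A * K * transpose_mat A)))"
    by (simp only: of_real_hom.hom_det)
  also have "\<dots> = det (1\<^sub>m n + complex_of_real (s * a) \<cdot>\<^sub>m (map_mat complex_of_real A * map_mat complex_of_real K
                                                 * mat_adjoint (map_mat complex_of_real A)))"
    unfolding map_mat_of_real_gram [OF A K(1)] mat_adjoint_of_real ..
  also have "\<dots> \<noteq> 0"
    using A K a \<open>0 \<le> s\<close> by (intro det_one_plus_gram_nonzero [where q = q]) auto
  finally show "det (1\<^sub>m n + s \<cdot>\<^sub>m (a \<cdot>\<^sub>m (A * K * transpose_mat A))) \<noteq> 0" by simp
qed

section \<open>Derivative of the log-determinant\<close>

lemma index_mult_mult_transpose:
  fixes X K Y :: "'a :: comm_ring_1 mat"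
  assumes X: "X \<in> carrier_mat n q" and K: "K \<in> carrier_mat q q" and Y: "Y \<in> carrier_mat n q"
    and "k < n" "j < n"
  shows "(X * K * transpose_mat Y) $$ (k, j) = (\<Sum>u<q. (\<Sum>v<q. X $$ (k, v) * K $$ (v, u)) * Y $$ (j, u))"
proof -
  have "(X * K * transpose_mat Y) $$ (k, j) = (\<Sum>u<q. (X * K) $$ (k, u) * transpose_mat Y $$ (u, j))"
    using assms by (intro index_mult_mat_sum [of _ n q]) auto
  also have "\<dots> = (\<Sum>u<q. (\<Sum>v<q. X $$ (k, v) * K $$ (v, u)) * Y $$ (j, u))"
    using assms by (intro sum.cong refl) (simp add: index_mult_mat_sum [of _ n q _ q] del: index_mult_mat(1))
  finally show ?thesis .
qed

lemma has_real_derivative_det_gram_path: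
  fixes A E K :: "real mat"
  assumes A: "A \<in> carrier_mat n q" and E: "E \<in> carrier_mat n q" and K: "K \<in> carrier_mat q q"
  shows "((\<lambda>s. det (1\<^sub>m n + a \<cdot>\<^sub>m ((A + s \<cdot>\<^sub>m E) * K * transpose_mat (A + s \<cdot>\<^sub>m E)))) has_real_derivative
     mat_trace (a \<cdot>\<^sub>m (E * K * transpose_mat A + A * K * transpose_mat E)
                * adj_mat (1\<^sub>m n + a \<cdot>\<^sub>m (A * K * transpose_mat A)))) (at 0)"
proof -
  define M where "M s = 1\<^sub>m n + a \<cdot>\<^sub>m ((A + s \<cdot>\<^sub>m E) * K * transpose_mat (A + s \<cdot>\<^sub>m E))" for s
  define M' where "M' = a \<cdot>\<^sub>m (E * K * transpose_mat A + A * K * transpose_mat E)"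
  have AE: "A + s \<cdot>\<^sub>m E \<in> carrier_mat n q" for s using A E by auto
  have "((\<lambda>s. M s $$ (k, j)) has_real_derivative M' $$ (k, j)) (at 0)" if "k < n" "j < n" for k j
  proof -
    have "M s $$ (k, j) = (if k = j then 1 else 0)
        + a * (\<Sum>u<q. (\<Sum>v<q. (A $$ (k, v) + s * E $$ (k, v)) * K $$ (v, u)) * (A $$ (j, u) + s * E $$ (j, u)))" for s
    proof -
      have "(A + s \<cdot>\<^sub>m E) $$ (i, v) = A $$ (i, v) + s * E $$ (i, v)" if "i < n" "v < q" for i v
        using A E that by simp
      thus ?thesis unfolding M_def using A E K AE that
        by (simp add: index_mult_mult_transpose [OF AE K AE] del: index_mult_mat(1))
    qed
    moreover have "M' $$ (k, j) = a * ((\<Sum>u<q. (\<Sum>v<q. E $$ (k, v) * K $$ (v, u)) * A $$ (j, u))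
                                    + (\<Sum>u<q. (\<Sum>v<q. A $$ (k, v) * K $$ (v, u)) * E $$ (j, u)))"
    proof -
      have "M' $$ (k, j) = a * ((E * K * transpose_mat A) $$ (k, j) + (A * K * transpose_mat E) $$ (k, j))"
        unfolding M'_def using A E K that by (simp del: index_mult_mat(1))
      thus ?thesis by (simp only: index_mult_mult_transpose [OF E K A that] index_mult_mult_transpose [OF A K E that])
    qed
    ultimately show ?thesis
      by (auto intro!: derivative_eq_intros simp: sum.distrib sum_distrib_right algebra_simps)
  qed
  moreover have "M s \<in> carrier_mat n n" for s
    unfolding M_def using AE [of s] E K by (intro add_carrier_mat smult_carrier_mat mult_carrier_mat [of _ n q]) auto
  moreover have "M' \<in> carrier_mat n n" unfolding M'_def using A E K by auto
  moreover have "A + 0 \<cdot>\<^sub>m E = A" using A E by (intro eq_matI) auto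
  ultimately show ?thesis using has_real_derivative_det [of M n M' 0] unfolding M_def M'_def by simp
qed

lemma transpose_smult_mat: "transpose_mat (a \<cdot>\<^sub>m X) = a \<cdot>\<^sub>m transpose_mat X"
  by (intro eq_matI) auto

lemma mat_trace_mult_comm:
  assumes "X \<in> carrier_mat n l" "Y \<in> carrier_mat l n"
  shows "mat_trace (X * Y) = mat_trace (Y * X)"
proof -
  have "mat_trace (X * Y) = (\<Sum>k<n. \<Sum>u<l. X $$ (k, u) * Y $$ (u, k))"
    unfolding mat_trace_def using assms by (intro sum.cong) (auto simp: index_mult_mat_sum [of _ n l _ n] simp del: index_mult_mat(1))
  also have "\<dots> = (\<Sum>u<l. \<Sum>k<n. Y $$ (u, k) * X $$ (k, u))"
    by (subst sum.swap) (simp add: mult.commute)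
  also have "\<dots> = mat_trace (Y * X)"
    unfolding mat_trace_def using assms by (intro sum.cong) (auto simp: index_mult_mat_sum [of _ l n _ l] simp del: index_mult_mat(1))
  finally show ?thesis .
qed

lemma mat_trace_mult_transpose:
  assumes "X \<in> carrier_mat n q" "Y \<in> carrier_mat n q"
  shows "mat_trace (X * transpose_mat Y) = (\<Sum>k<n. \<Sum>u<q. X $$ (k, u) * Y $$ (k, u))"
  unfolding mat_trace_def using assms
  by (intro sum.cong) (auto simp: index_mult_mat_sum [of _ n q _ n] simp del: index_mult_mat(1))

lemma mat_trace_add: "X \<in> carrier_mat n n \<Longrightarrow> Y \<in> carrier_mat n n \<Longrightarrow> mat_trace (X + Y) = mat_trace X + mat_trace Y"
  unfolding mat_trace_def by (simp add: sum.distrib)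

lemma mat_trace_smult: "X \<in> carrier_mat n n \<Longrightarrow> mat_trace (a \<cdot>\<^sub>m X) = a * mat_trace X"
  unfolding mat_trace_def by (simp add: sum_distrib_left)

lemma mat_trace_resolvent_adj_right:
  fixes A E G K M Adj :: "'a :: comm_ring_1 mat"
  assumes A: "A \<in> carrier_mat n q" and E: "E \<in> carrier_mat n q" and G: "G \<in> carrier_mat n q"
    and K: "K \<in> carrier_mat q q" and M: "M \<in> carrier_mat n n" and Adj: "Adj \<in> carrier_mat n n"
    and MG: "M * G = a \<cdot>\<^sub>m (A * K)" and adj: "Adj * M = d \<cdot>\<^sub>m 1\<^sub>m n"
  shows "mat_trace ((a \<cdot>\<^sub>m (A * K * transpose_mat E)) * Adj) = d * (\<Sum>k<n. \<Sum>u<q. E $$ (k, u) * G $$ (k, u))"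
proof -
  have "a \<cdot>\<^sub>m (A * K * transpose_mat E) = M * G * transpose_mat E"
    using A K E by (simp add: MG mult_smult_assoc_mat [of _ n q _ n])
  also have "\<dots> = M * (G * transpose_mat E)"
    using M G E by (intro assoc_mult_mat [of _ n n _ q _ n]) auto
  finally have "Adj * (a \<cdot>\<^sub>m (A * K * transpose_mat E)) = (Adj * M) * (G * transpose_mat E)"
    using Adj M G E by (simp add: assoc_mult_mat [of _ n n _ n _ n])
  also have "\<dots> = d \<cdot>\<^sub>m (G * transpose_mat E)"
    using G E by (simp add: adj mult_smult_assoc_mat [of _ n n _ n])
  finally have "mat_trace (Adj * (a \<cdot>\<^sub>m (A * K * transpose_mat E))) = d * (\<Sum>k<n. \<Sum>u<q. G $$ (k, u) * E $$ (k, u))"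
    using G E by (simp add: mat_trace_smult [of _ n] mat_trace_mult_transpose)
  moreover have "mat_trace ((a \<cdot>\<^sub>m (A * K * transpose_mat E)) * Adj) = mat_trace (Adj * (a \<cdot>\<^sub>m (A * K * transpose_mat E)))"
    using A K E Adj by (intro mat_trace_mult_comm [of _ n n]) auto
  ultimately show ?thesis by (simp add: mult.commute)
qed

lemma mat_trace_resolvent_adj_left:
  fixes A E G K M Adj :: "'a :: comm_ring_1 mat"
  assumes A: "A \<in> carrier_mat n q" and E: "E \<in> carrier_mat n q" and G: "G \<in> carrier_mat n q"
    and K: "K \<in> carrier_mat q q" "transpose_mat K = K" and M: "M \<in> carrier_mat n n" "transpose_mat M = M"
    and Adj: "Adj \<in> carrier_mat n n" and MG: "M * G = a \<cdot>\<^sub>m (A * K)" and adj: "M * Adj = d \<cdot>\<^sub>m 1\<^sub>m n"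
  shows "mat_trace ((a \<cdot>\<^sub>m (E * K * transpose_mat A)) * Adj) = d * (\<Sum>k<n. \<Sum>u<q. E $$ (k, u) * G $$ (k, u))"
proof -
  have GT: "transpose_mat G \<in> carrier_mat q n" using G by simp
  have "a \<cdot>\<^sub>m (K * transpose_mat A) = transpose_mat (a \<cdot>\<^sub>m (A * K))"
    using A K by (simp add: transpose_smult_mat transpose_mult [of _ n q _ q])
  also have "\<dots> = transpose_mat G * M"
    using M G by (simp add: MG [symmetric] transpose_mult [of _ n n _ q])
  finally have KA: "a \<cdot>\<^sub>m (K * transpose_mat A) = transpose_mat G * M" .
  have "a \<cdot>\<^sub>m (E * K * transpose_mat A) = E * (a \<cdot>\<^sub>m (K * transpose_mat A))"
    using A K E by (simp add: mult_smult_distrib [of _ n q _ n] assoc_mult_mat [of _ n q _ q _ n])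
  also have "\<dots> = E * transpose_mat G * M"
    using E GT M by (simp add: KA assoc_mult_mat [of _ n q _ n _ n])
  finally have "(a \<cdot>\<^sub>m (E * K * transpose_mat A)) * Adj = E * transpose_mat G * (M * Adj)"
    using E GT M Adj by (simp add: assoc_mult_mat [of _ n q _ n _ n] assoc_mult_mat [of _ q n _ n _ n])
  also have "\<dots> = d \<cdot>\<^sub>m (E * transpose_mat G)"
    using E G by (simp add: adj mult_smult_distrib [of _ n n _ n])
  finally show ?thesis using E G by (simp add: mat_trace_smult [of _ n] mat_trace_mult_transpose)
qed

text \<open>The two halves of the derivative of M = 1 + a A K A^T along E pair with a solution G of
  M G = a A K; for the half E K A^T this uses the symmetry of K and M.\<close>
lemma mat_trace_gram_derivative_adj:
  fixes A E G K Adj :: "'a :: comm_ring_1 mat"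
  assumes A: "A \<in> carrier_mat n q" and E: "E \<in> carrier_mat n q" and G: "G \<in> carrier_mat n q"
    and K: "K \<in> carrier_mat q q" "transpose_mat K = K" and Adj: "Adj \<in> carrier_mat n n"
    and M: "M = 1\<^sub>m n + a \<cdot>\<^sub>m (A * K * transpose_mat A)"
    and MG: "M * G = a \<cdot>\<^sub>m (A * K)"
    and adj: "Adj * M = d \<cdot>\<^sub>m 1\<^sub>m n" "M * Adj = d \<cdot>\<^sub>m 1\<^sub>m n"
  shows "mat_trace (a \<cdot>\<^sub>m (E * K * transpose_mat A + A * K * transpose_mat E) * Adj)
       = 2 * d * (\<Sum>k<n. \<Sum>u<q. E $$ (k, u) * G $$ (k, u))"
proof -
  have Mc: "M \<in> carrier_mat n n" unfolding M using A K by auto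
  have "transpose_mat (A * K * transpose_mat A) = A * K * transpose_mat A"
    using A K by (simp add: transpose_mult [of _ n q _ n] transpose_mult [of _ q q _ n] assoc_mult_mat [of _ n q _ q _ n])
  hence M_sym: "transpose_mat M = M"
    unfolding M using A K by (subst transpose_add [of _ n n]) (auto simp: transpose_smult_mat)
  have products: "E * K * transpose_mat A \<in> carrier_mat n n" "A * K * transpose_mat E \<in> carrier_mat n n"
    using A E K by (intro mult_carrier_mat [of _ n q]; simp)+
  have split: "a \<cdot>\<^sub>m (E * K * transpose_mat A + A * K * transpose_mat E) * Adj
      = (a \<cdot>\<^sub>m (E * K * transpose_mat A)) * Adj + (a \<cdot>\<^sub>m (A * K * transpose_mat E)) * Adj"
    using products Adj by (simp add: add_smult_distrib_left_mat [of _ n n] add_mult_distrib_mat [of _ n n])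
  have "mat_trace (a \<cdot>\<^sub>m (E * K * transpose_mat A + A * K * transpose_mat E) * Adj)
      = mat_trace ((a \<cdot>\<^sub>m (E * K * transpose_mat A)) * Adj) + mat_trace ((a \<cdot>\<^sub>m (A * K * transpose_mat E)) * Adj)"
    unfolding split by (intro mat_trace_add [of _ n] mult_carrier_mat [of _ n n] smult_carrier_mat products Adj)
  thus ?thesis
    unfolding mat_trace_resolvent_adj_left [OF A E G K Mc M_sym Adj MG adj(2)]
      mat_trace_resolvent_adj_right [OF A E G K(1) Mc Adj MG adj(1)]
    by (simp add: algebra_simps)
qed

lemma has_real_derivative_ln_det_gram_path:
  fixes A E K :: "real mat"
  assumes A: "A \<in> carrier_mat n q" and E: "E \<in> carrier_mat n q"
    and K: "K \<in> carrier_mat q q" "diagonal_mat K" "\<forall>j<q. K $$ (j, j) \<ge> 0" and a: "a \<ge> 0"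
  shows "((\<lambda>s. ln (det (1\<^sub>m n + a \<cdot>\<^sub>m ((A + s \<cdot>\<^sub>m E) * K * transpose_mat (A + s \<cdot>\<^sub>m E))))) has_real_derivative
     mat_trace (a \<cdot>\<^sub>m (E * K * transpose_mat A + A * K * transpose_mat E)
                * adj_mat (1\<^sub>m n + a \<cdot>\<^sub>m (A * K * transpose_mat A)))
     / det (1\<^sub>m n + a \<cdot>\<^sub>m (A * K * transpose_mat A))) (at 0)"
proof -
  have A0: "A + 0 \<cdot>\<^sub>m E = A" using A E by (intro eq_matI) auto
  hence "0 < det (1\<^sub>m n + a \<cdot>\<^sub>m ((A + 0 \<cdot>\<^sub>m E) * K * transpose_mat (A + 0 \<cdot>\<^sub>m E)))"
    using det_one_plus_gram_pos [OF A K a] by simp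
  from DERIV_chain2 [OF DERIV_ln_divide [OF this] has_real_derivative_det_gram_path [OF A E K(1)]]
  show ?thesis unfolding A0 by simp
qed

lemma mat_trace_map_of_real:
  "X \<in> carrier_mat n n \<Longrightarrow> mat_trace (map_mat complex_of_real X) = complex_of_real (mat_trace X)"
  unfolding mat_trace_def by simp

lemma map_mat_of_real_mult_mult_transpose:
  fixes X K Y :: "real mat"
  assumes "X \<in> carrier_mat n q" "K \<in> carrier_mat q q" "Y \<in> carrier_mat l q"
  shows "map_mat complex_of_real (X * K * transpose_mat Y)
    = map_mat complex_of_real X * map_mat complex_of_real K * transpose_mat (map_mat complex_of_real Y)"
proof -
  have "map_mat complex_of_real (X * K * transpose_mat Y)
      = map_mat complex_of_real (X * K) * map_mat complex_of_real (transpose_mat Y)"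
    using assms by (intro of_real_hom.mat_hom_mult [of _ n q]) auto
  also have "map_mat complex_of_real (X * K) = map_mat complex_of_real X * map_mat complex_of_real K"
    using assms by (intro of_real_hom.mat_hom_mult [of _ n q]) auto
  also have "map_mat complex_of_real (transpose_mat Y) = transpose_mat (map_mat complex_of_real Y)"
    by (intro eq_matI) auto
  finally show ?thesis .
qed

lemma of_real_mat_trace_gram_derivative_adj:
  fixes A E K :: "real mat" and G :: "complex mat"
  assumes A: "A \<in> carrier_mat n q" and E: "E \<in> carrier_mat n q" and G: "G \<in> carrier_mat n q"
    and K: "K \<in> carrier_mat q q" "transpose_mat K = K"
    and MG: "map_mat complex_of_real (1\<^sub>m n + a \<cdot>\<^sub>m (A * K * transpose_mat A)) * G
           = complex_of_real a \<cdot>\<^sub>m (map_mat complex_of_real A * map_mat complex_of_real K)"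
  shows "complex_of_real (mat_trace (a \<cdot>\<^sub>m (E * K * transpose_mat A + A * K * transpose_mat E)
                                    * adj_mat (1\<^sub>m n + a \<cdot>\<^sub>m (A * K * transpose_mat A))))
       = 2 * complex_of_real (det (1\<^sub>m n + a \<cdot>\<^sub>m (A * K * transpose_mat A)))
           * (\<Sum>k<n. \<Sum>u<q. complex_of_real (E $$ (k, u)) * G $$ (k, u))"
proof -
  define M where "M = 1\<^sub>m n + a \<cdot>\<^sub>m (A * K * transpose_mat A)"
  define N where "N = a \<cdot>\<^sub>m (E * K * transpose_mat A + A * K * transpose_mat E)"
  have M: "M \<in> carrier_mat n n" unfolding M_def using A K by auto
  note adj = adj_mat [OF M]
  let ?c = "map_mat complex_of_real"
  have N: "N \<in> carrier_mat n n" unfolding N_def using A E K by auto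
  have M_c: "?c M = 1\<^sub>m n + complex_of_real a \<cdot>\<^sub>m (?c A * ?c K * transpose_mat (?c A))"
    unfolding M_def map_mat_of_real_gram [OF A K(1)] ..
  have "?c (a \<cdot>\<^sub>m (X + Y)) = complex_of_real a \<cdot>\<^sub>m (?c X + ?c Y)"
    if "X \<in> carrier_mat n n" "Y \<in> carrier_mat n n" for X Y :: "real mat"
    using that by (intro eq_matI) auto
  hence N_c: "?c N = complex_of_real a \<cdot>\<^sub>m (?c E * ?c K * transpose_mat (?c A) + ?c A * ?c K * transpose_mat (?c E))"
    unfolding N_def map_mat_of_real_mult_mult_transpose [OF E K(1) A, symmetric]
      map_mat_of_real_mult_mult_transpose [OF A K(1) E, symmetric]
    using A E K by (metis mult_carrier_mat transpose_carrier_mat)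
  have adj_c: "?c (adj_mat M) * ?c M = complex_of_real (det M) \<cdot>\<^sub>m 1\<^sub>m n"
    "?c M * ?c (adj_mat M) = complex_of_real (det M) \<cdot>\<^sub>m 1\<^sub>m n"
    using adj M by (auto simp: of_real_hom.mat_hom_mult [symmetric, of _ n n])
  have "transpose_mat (?c K) = ?c (transpose_mat K)" by (intro eq_matI) auto
  hence K_c: "transpose_mat (?c K) = ?c K" unfolding K(2) .
  have "complex_of_real (mat_trace (N * adj_mat M)) = mat_trace (?c N * ?c (adj_mat M))"
    using N adj(1) by (simp add: of_real_hom.mat_hom_mult [of _ n n] flip: mat_trace_map_of_real [of _ n])
  also have "\<dots> = 2 * complex_of_real (det M) * (\<Sum>k<n. \<Sum>u<q. ?c E $$ (k, u) * G $$ (k, u))"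
    unfolding N_c using A E G K adj(1) K_c MG [folded M_def] adj_c
    by (intro mat_trace_gram_derivative_adj [OF _ _ G _ K_c _ M_c]) auto
  finally show ?thesis unfolding M_def N_def using E by simp
qed

section \<open>Gradient of log det (1 + a circ(Z) (P \<otimes> I) circ(Z)^T)\<close>

definition unit_sig :: "nat \<Rightarrow> nat \<Rightarrow> nat \<Rightarrow> sigarr" where
  "unit_sig c t i = (\<lambda>c' t' i'. if c' = c \<and> t' = t \<and> i' = i then 1 else 0)"

lemma circZ_perturb:
  "circZ C T m (perturb Z c t i s) = circZ C T m Z + s \<cdot>\<^sub>m circZ C T m (unit_sig c t i)"
  unfolding circZ_def perturb_def unit_sig_def by (intro eq_matI) auto

lemma sum_lag_indicator:
  assumes T: "T > 0" and "a < T" "t < T"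
  shows "(\<Sum>b<T. if nat ((int a - int b) mod int T) = t then x else 0) = x"
proof -
  define b0 where "b0 = nat ((int a - int t) mod int T)"
  have b0: "b0 < T" unfolding b0_def using T by (simp add: nat_less_iff)
  have "nat ((int a - int b) mod int T) = t \<longleftrightarrow> b = b0" if "b < T" for b
  proof -
    have "nat ((int a - int b) mod int T) = t \<longleftrightarrow> (int a - int b) mod int T = int t mod int T"
      using assms by auto
    also have "\<dots> \<longleftrightarrow> (int a - int t) mod int T = int b mod int T"
      by (simp add: mod_eq_dvd_iff algebra_simps)
    also have "\<dots> \<longleftrightarrow> b = b0" unfolding b0_def using that T by auto
    finally show ?thesis .
  qed
  hence "(\<Sum>b<T. if nat ((int a - int b) mod int T) = t then x else 0) = (\<Sum>b<T. if b = b0 then x else 0)"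
    by (intro sum.cong refl) simp
  thus ?thesis using b0 by simp
qed

text \<open>Pairing block_circ T C m W with the derivative of circ(Z) in the entry (c, t, i) reads off
  the inverse DFT of W at that entry, once for every one of the T rows of the block.\<close>
lemma pair_circZ_unit_sig_block_circ:
  assumes T: "T > 0" and c: "c < C" and i: "i < m" and t: "t < T"
  shows "(\<Sum>k<C * T. \<Sum>u<m * T. complex_of_real (circZ C T m (unit_sig c t i) $$ (k, u)) * block_circ T C m W $$ (k, u))
    = of_nat T * IDFT T W c t i"
proof -
  define f where "f k u = complex_of_real (circZ C T m (unit_sig c t i) $$ (k, u)) * block_circ T C m W $$ (k, u)" for k u
  have single: "(\<Sum>x<N. g x) = g x0" if "x0 < N" "\<And>x. x < N \<Longrightarrow> x \<noteq> x0 \<Longrightarrow> g x = 0" for N x0 and g :: "nat \<Rightarrow> complex"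
    using that by (subst sum.mono_neutral_right [of "{..<N}" "{x0}"]) auto
  have off_block: "f (c' * T + a) (i' * T + b) = 0" if "c' < C" "a < T" "i' < m" "b < T" "c' \<noteq> c \<or> i' \<noteq> i" for c' a i' b
    using that by (auto simp: f_def index_circZ unit_sig_def)
  have in_block: "f (c * T + a) (i * T + b) = (if nat ((int a - int b) mod int T) = t then IDFT T W c t i else 0)"
    if "a < T" "b < T" for a b
  proof -
    have "unit_root T (int p * (int a - int b)) = unit_root T (int p * int t)" if "nat ((int a - int b) mod int T) = t" for p
    proof -
      have "(int a - int b) mod int T = int t" using that T by auto
      hence "(int p * (int a - int b)) mod int T = (int p * int t) mod int T" by (metis mod_mult_right_eq)
      thus ?thesis by (metis unit_root_mod [OF T])
    qed
    thus ?thesis using that c i by (simp add: f_def index_circZ unit_sig_def index_block_circ IDFT_def inverse_omega_power)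
  qed
  have "(\<Sum>k<C * T. \<Sum>u<m * T. f k u) = (\<Sum>c'<C. \<Sum>a<T. \<Sum>i'<m. \<Sum>b<T. f (c' * T + a) (i' * T + b))"
    by (simp add: sum_lessThan_mult_blocks)
  also have "\<dots> = (\<Sum>a<T. \<Sum>i'<m. \<Sum>b<T. f (c * T + a) (i' * T + b))"
    using c off_block by (intro single) auto
  also have "\<dots> = (\<Sum>a<T. \<Sum>b<T. f (c * T + a) (i * T + b))"
  proof (rule sum.cong [OF refl])
    fix a assume "a \<in> {..<T}"
    thus "(\<Sum>i'<m. \<Sum>b<T. f (c * T + a) (i' * T + b)) = (\<Sum>b<T. f (c * T + a) (i * T + b))"
      using i c off_block by (intro single [of i m "\<lambda>i'. \<Sum>b<T. f (c * T + a) (i' * T + b)"]) auto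
  qed
  also have "\<dots> = (\<Sum>a<T. IDFT T W c t i)"
    using T t by (intro sum.cong refl) (simp add: in_block sum_lag_indicator)
  finally show ?thesis unfolding f_def by simp
qed

lemma kron_id_carrier: "P \<in> carrier_mat m m \<Longrightarrow> kron_id T P \<in> carrier_mat (m * T) (m * T)"
  unfolding kron_id_def by simp

lemma kron_id_diagonal:
  assumes "P \<in> carrier_mat m m" "diagonal_mat P"
  shows "diagonal_mat (kron_id T P)"
  unfolding diagonal_mat_def
proof (intro allI impI)
  fix r s assume "r < dim_row (kron_id T P)" "s < dim_col (kron_id T P)" "r \<noteq> s"
  moreover have "r mod T = s mod T \<Longrightarrow> r div T \<noteq> s div T" using \<open>r \<noteq> s\<close> by (metis div_mult_mod_eq)
  ultimately show "kron_id T P $$ (r, s) = 0"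
    using assms unfolding kron_id_def diagonal_mat_def by (auto simp: less_mult_imp_div_less)
qed

lemma kron_id_diag_nonneg:
  "P \<in> carrier_mat m m \<Longrightarrow> \<forall>j<m. P $$ (j, j) \<ge> 0 \<Longrightarrow> \<forall>j<m * T. kron_id T P $$ (j, j) \<ge> 0"
  unfolding kron_id_def by (auto simp: less_mult_imp_div_less)

lemma kron_id_one: "kron_id T (1\<^sub>m m) = 1\<^sub>m (m * T)"
proof (rule eq_matI)
  fix r s assume "r < dim_row (1\<^sub>m (m * T) :: real mat)" "s < dim_col (1\<^sub>m (m * T) :: real mat)"
  moreover have "r mod T = s mod T \<and> r div T = s div T \<longleftrightarrow> r = s" by (metis div_mult_mod_eq)
  ultimately show "kron_id T (1\<^sub>m m) $$ (r, s) = 1\<^sub>m (m * T) $$ (r, s)"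
    unfolding kron_id_def by (auto simp: less_mult_imp_div_less)
qed (auto simp: kron_id_def)

lemma transpose_diagonal_mat: "A \<in> carrier_mat n n \<Longrightarrow> diagonal_mat A \<Longrightarrow> transpose_mat A = A"
  unfolding diagonal_mat_def by (intro eq_matI) (auto, metis)

lemma mult_smult_mat_inv_cancel:
  fixes S F Q :: "'a :: field mat"
  assumes S: "S \<in> carrier_mat n n" "det S \<noteq> 0" and F: "F \<in> carrier_mat n m" and Q: "Q \<in> carrier_mat m m"
  shows "S * ((k \<cdot>\<^sub>m mat_inv S) * F * Q) = k \<cdot>\<^sub>m (F * Q)"
proof -
  note inv = mat_inv_right [OF S]
  have "S * ((k \<cdot>\<^sub>m mat_inv S) * F * Q) = (S * ((k \<cdot>\<^sub>m mat_inv S) * F)) * Q"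
    using S F Q inv by (intro assoc_mult_mat [of _ n n _ m _ m, symmetric]) auto
  also have "S * ((k \<cdot>\<^sub>m mat_inv S) * F) = (S * (k \<cdot>\<^sub>m mat_inv S)) * F"
    using S F inv by (intro assoc_mult_mat [of _ n n _ n _ m, symmetric]) auto
  also have "S * (k \<cdot>\<^sub>m mat_inv S) = k \<cdot>\<^sub>m 1\<^sub>m n"
    using S inv by (simp add: mult_smult_distrib [of _ n n _ n])
  also have "(k \<cdot>\<^sub>m 1\<^sub>m n) * F = k \<cdot>\<^sub>m F"
    using F by (simp add: mult_smult_assoc_mat [of _ n n _ m])
  finally show ?thesis using F Q by (simp add: mult_smult_assoc_mat [of _ n m _ m])
qed

text \<open>In the Fourier domain the block-circulant Gram matrix becomes the family S p, so its
  resolvent against circ(Z) kron(P) is the block circulant of the frequency-wise resolvents.\<close>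
lemma circ_gram_mult_block_circ_resolvent:
  fixes C T m :: nat and Z :: sigarr and a :: real and P :: "real mat"
  assumes T: "T > 0" and a: "a \<ge> 0" and P: "P \<in> carrier_mat m m" "diagonal_mat P" "\<forall>j<m. P $$ (j, j) \<ge> 0"
  defines "F \<equiv> DFTZ C T m Z" and "P' \<equiv> map_mat complex_of_real P"
  defines "S \<equiv> \<lambda>p. 1\<^sub>m C + complex_of_real a \<cdot>\<^sub>m (F p * P' * mat_adjoint (F p))"
  shows "map_mat complex_of_real (1\<^sub>m (C * T) + a \<cdot>\<^sub>m (circZ C T m Z * kron_id T P * transpose_mat (circZ C T m Z)))
           * block_circ T C m (\<lambda>p. (complex_of_real a \<cdot>\<^sub>m mat_inv (S p)) * F p * P')
       = complex_of_real a \<cdot>\<^sub>m (map_mat complex_of_real (circZ C T m Z) * map_mat complex_of_real (kron_id T P))"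
proof -
  have F: "F p \<in> carrier_mat C m" for p unfolding F_def by simp
  have P': "P' \<in> carrier_mat m m" unfolding P'_def using P by simp
  have FP: "F p * P' \<in> carrier_mat C m" and FA: "mat_adjoint (F p) \<in> carrier_mat m C" for p
    using F [of p] P' mat_adjoint_carrier [of "F p"] by auto
  have FPF: "F p * P' * mat_adjoint (F p) \<in> carrier_mat C C" for p using FP [of p] FA [of p] by (rule mult_carrier_mat)
  have S: "S p \<in> carrier_mat C C" "det (S p) \<noteq> 0" for p
    unfolding S_def P'_def using FPF [of p] det_one_plus_gram_nonzero [OF F P a] by (auto simp: P'_def)
  have AK: "map_mat complex_of_real (circZ C T m Z) * map_mat complex_of_real (kron_id T P) = block_circ T C m (\<lambda>p. F p * P')"
    unfolding circZ_eq_block_circ [OF T] kron_id_eq_block_circ [OF T P(1)] F_def [symmetric] P'_def [symmetric]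
    using F P' by (intro block_circ_mult [OF T]) auto
  have "map_mat complex_of_real (1\<^sub>m (C * T) + a \<cdot>\<^sub>m (circZ C T m Z * kron_id T P * transpose_mat (circZ C T m Z)))
      = 1\<^sub>m (C * T) + complex_of_real a \<cdot>\<^sub>m block_circ T C C (\<lambda>p. F p * P' * mat_adjoint (F p))"
    using FP FA unfolding map_mat_of_real_gram [OF circZ_carrier kron_id_carrier [OF P(1)]] AK
      transpose_circZ_eq_block_circ [OF T] F_def [symmetric]
    by (subst block_circ_mult [OF T]) auto
  also have "\<dots> = block_circ T C C S"
    unfolding S_def using FPF
    by (simp add: block_circ_add block_circ_smult block_circ_one [OF T])
  finally have M: "map_mat complex_of_real (1\<^sub>m (C * T) + a \<cdot>\<^sub>m (circZ C T m Z * kron_id T P * transpose_mat (circZ C T m Z)))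
      = block_circ T C C S" .
  have "block_circ T C C S * block_circ T C m (\<lambda>p. (complex_of_real a \<cdot>\<^sub>m mat_inv (S p)) * F p * P')
      = block_circ T C m (\<lambda>p. complex_of_real a \<cdot>\<^sub>m (F p * P'))"
    using mult_carrier_mat [OF mult_carrier_mat [OF smult_carrier_mat [OF mat_inv_right (2) [OF S]] F] P'] S(1)
    by (subst block_circ_mult [OF T]) (auto simp: mult_smult_mat_inv_cancel [OF S F P'])
  also have "\<dots> = complex_of_real a \<cdot>\<^sub>m block_circ T C m (\<lambda>p. F p * P')"
    using FP by (intro block_circ_smult)
  finally show ?thesis unfolding M AK .
qed

lemma has_real_derivative_ln_det_circ:
  fixes C T m :: nat and Z :: sigarr and a :: real and P :: "real mat"
  assumes T: "T > 0" and a: "a \<ge> 0" and P: "P \<in> carrier_mat m m" "diagonal_mat P" "\<forall>j<m. P $$ (j, j) \<ge> 0"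
    and c: "c < C" and t: "t < T" and i: "i < m"
  shows "\<exists>D. ((\<lambda>s. ln (det (1\<^sub>m (C * T) + a \<cdot>\<^sub>m
                   (circZ C T m (perturb Z c t i s) * kron_id T P
                     * transpose_mat (circZ C T m (perturb Z c t i s)))))) has_real_derivative D) (at 0)
      \<and> complex_of_real (D / (2 * real T)) = IDFT T (\<lambda>p. (complex_of_real a \<cdot>\<^sub>m
                mat_inv (1\<^sub>m C + complex_of_real a \<cdot>\<^sub>m
                  (DFTZ C T m Z p * map_mat complex_of_real P * mat_adjoint (DFTZ C T m Z p))))
                * DFTZ C T m Z p * map_mat complex_of_real P) c t i"
proof -
  define A where "A = circZ C T m Z"
  define E where "E = circZ C T m (unit_sig c t i)"
  define K where "K = kron_id T P"
  define M where "M = 1\<^sub>m (C * T) + a \<cdot>\<^sub>m (A * K * transpose_mat A)"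
  define W where "W = (\<lambda>p. (complex_of_real a \<cdot>\<^sub>m
                mat_inv (1\<^sub>m C + complex_of_real a \<cdot>\<^sub>m
                  (DFTZ C T m Z p * map_mat complex_of_real P * mat_adjoint (DFTZ C T m Z p))))
                * DFTZ C T m Z p * map_mat complex_of_real P)"
  define D where "D = mat_trace (a \<cdot>\<^sub>m (E * K * transpose_mat A + A * K * transpose_mat E) * adj_mat M) / det M"
  have A: "A \<in> carrier_mat (C * T) (m * T)" and E: "E \<in> carrier_mat (C * T) (m * T)"
    unfolding A_def E_def by simp_all
  have K: "K \<in> carrier_mat (m * T) (m * T)" "diagonal_mat K" "\<forall>j<m * T. K $$ (j, j) \<ge> 0"
    unfolding K_def using P by (simp_all add: kron_id_carrier kron_id_diagonal kron_id_diag_nonneg)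
  have "((\<lambda>s. ln (det (1\<^sub>m (C * T) + a \<cdot>\<^sub>m
                   (circZ C T m (perturb Z c t i s) * kron_id T P
                     * transpose_mat (circZ C T m (perturb Z c t i s)))))) has_real_derivative D) (at 0)"
    using has_real_derivative_ln_det_gram_path [OF A E K a]
    unfolding D_def M_def circZ_perturb A_def E_def K_def .
  moreover have "complex_of_real (D * det M) = 2 * complex_of_real (det M) * (of_nat T * IDFT T W c t i)"
  proof -
    have MG: "map_mat complex_of_real M * block_circ T C m W
        = complex_of_real a \<cdot>\<^sub>m (map_mat complex_of_real A * map_mat complex_of_real K)"
      unfolding M_def A_def K_def W_def by (rule circ_gram_mult_block_circ_resolvent [OF T a P])
    have "D * det M = mat_trace (a \<cdot>\<^sub>m (E * K * transpose_mat A + A * K * transpose_mat E) * adj_mat M)"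
      using det_one_plus_gram_pos [OF A K a] unfolding D_def M_def by simp
    also have "complex_of_real \<dots>
        = 2 * complex_of_real (det M) * (\<Sum>k<C * T. \<Sum>u<m * T. complex_of_real (E $$ (k, u)) * block_circ T C m W $$ (k, u))"
      unfolding M_def
      by (rule of_real_mat_trace_gram_derivative_adj [OF A E block_circ_carrier K(1) transpose_diagonal_mat [OF K(1,2)]
            MG [unfolded M_def]])
    finally show ?thesis unfolding E_def using pair_circZ_unit_sig_block_circ [OF T c i t] by simp
  qed
  hence "complex_of_real (D / (2 * real T)) = IDFT T W c t i"
    using det_one_plus_gram_pos [OF A K a] T unfolding M_def
    by (simp add: field_simps)
  ultimately show ?thesis unfolding W_def by blast
qed

theorem theorem3:
  fixes C T m k :: nat and Z :: sigarr and \<alpha> :: real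
    and \<alpha>j \<gamma> :: "nat \<Rightarrow> real" and Pi :: "nat \<Rightarrow> real mat"
  assumes "C > 0" and "T > 0" and "m > 0"
    and "\<alpha> > 0"
    and "\<forall>j\<in>{1..k}. \<alpha>j j > 0 \<and> Pi j \<in> carrier_mat m m \<and> diagonal_mat (Pi j)
                      \<and> (\<forall>i<m. Pi j $$ (i, i) \<ge> 0)"
  shows
    "let F = DFTZ C T m Z;
         E = (\<lambda>p. complex_of_real \<alpha> \<cdot>\<^sub>m
                mat_inv (1\<^sub>m C + complex_of_real \<alpha> \<cdot>\<^sub>m (F p * mat_adjoint (F p))));
         Cj = (\<lambda>j p. complex_of_real (\<alpha>j j) \<cdot>\<^sub>m
                mat_inv (1\<^sub>m C + complex_of_real (\<alpha>j j) \<cdot>\<^sub>m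
                  (F p * map_mat complex_of_real (Pi j) * mat_adjoint (F p))));
         U = (\<lambda>p. E p * F p);
         W = (\<lambda>j p. Cj j p * F p)
     in (\<forall>c<C. \<forall>t<T. \<forall>i<m.
           \<exists>D. ((\<lambda>s. ln (det (1\<^sub>m (C * T) + \<alpha> \<cdot>\<^sub>m
                   (circZ C T m (perturb Z c t i s) * transpose_mat (circZ C T m (perturb Z c t i s))))))
                 has_real_derivative D) (at 0)
              \<and> complex_of_real (D / (2 * real T)) = IDFT T U c t i)
      \<and> (\<forall>j\<in>{1..k}. \<forall>c<C. \<forall>t<T. \<forall>i<m.
           \<exists>D. ((\<lambda>s. ln (det (1\<^sub>m (C * T) + \<alpha>j j \<cdot>\<^sub>m
                   (circZ C T m (perturb Z c t i s) * kron_id T (Pi j)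
                     * transpose_mat (circZ C T m (perturb Z c t i s))))))
                 has_real_derivative D) (at 0)
              \<and> complex_of_real (\<gamma> j * D / (2 * real T))
                  = complex_of_real (\<gamma> j) * IDFT T (\<lambda>p. W j p * map_mat complex_of_real (Pi j)) c t i)"
proof -
  have identity: "(1\<^sub>m m :: real mat) \<in> carrier_mat m m" "diagonal_mat (1\<^sub>m m :: real mat)"
    "\<forall>j<m. (1\<^sub>m m :: real mat) $$ (j, j) \<ge> 0"
    by (auto simp: diagonal_mat_def)
  have circ_one: "circZ C T m X * kron_id T (1\<^sub>m m) = circZ C T m X" for X
    using circZ_carrier [of C T m X] by (simp add: kron_id_one)
  have scaled: "\<exists>D. Q D \<and> complex_of_real (g * D / x) = complex_of_real g * y"
    if "\<exists>D. Q D \<and> complex_of_real (D / x) = y" for Q and g x :: real and y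
    using that by (metis of_real_mult times_divide_eq_right)
  show ?thesis
    unfolding Let_def
    apply (intro conjI allI impI ballI)
    subgoal premises entry for c t i
      using has_real_derivative_ln_det_circ [OF \<open>T > 0\<close> less_imp_le [OF \<open>\<alpha> > 0\<close>] identity entry, of Z]
      by (simp add: circ_one of_real_hom.mat_hom_one)
    subgoal premises prems for j c t i
      using prems assms(5) by (intro scaled has_real_derivative_ln_det_circ [OF \<open>T > 0\<close>]) (auto intro: less_imp_le)
    done
qed

end
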